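(* Let $\Gamma\subset\mathbf{Z}^n$ be an almost periodic pattern, $\varepsilon>0$, $\delta>0$ and $A\in GL_n(\mathbf{R})$. Then there exist $R_{\varepsilon,\delta}>0$ and a relatively dense set $\widetilde{\mathcal N}_{\varepsilon,\delta}$ such that: for all $R\ge R_{\varepsilon,\delta}$ and all $v\in\widetilde{\mathcal N}_{\varepsilon,\delta}$, $D_R^+\big((\Gamma+v)\Delta\Gamma\big)<\varepsilon$; for every $v\in\widetilde{\mathcal N}_{\varepsilon,\delta}$, $d_\infty(Av,\mathbf{Z}^n)<\delta$; and for every $i\in I_\mathbf{Q}(A)$ and every $v\in\widetilde{\mathcal N}_{\varepsilon,\delta}$, $(Av)_i\in\mathbf{Z}$.
   Context: Balls are for the sup norm: $B(x,R)=\{y:\max_i|x_i-y_i|<R\}$; $d_\infty$ is the distance induced by the sup norm. Relatively dense: there is $R_0>0$ such that every ball of radius at least $R_0$ meets the set; uniformly discrete: there is $r>0$ such that every ball of radius at most $r$ contains at most one point; Delone: both. $D_R^+(\Gamma)=\sup_{x\in\mathbf{R}^n}\frac{\operatorname{Card}(B(x,R)\cap\Gamma)}{\operatorname{Card}(B(x,R)\cap\mathbf{Z}^n)}$. A Delone set $\Gamma\subset\mathbf{Z}^n$ is an almost periodic pattern if for every $\varepsilon>0$ there exist $R_\varepsilon>0$ and a relatively dense set $\mathcal N_\varepsilon$ with $D_R^+((\Gamma+v)\Delta\Gamma)<\varepsilon$ for all $R\ge R_\varepsilon$, $v\in\mathcal N_\varepsilon$. For $A=(a_{i,j})\in GL_n(\mathbf{R})$,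 $I_\mathbf{Q}(A)$ is the set of row indices $i$ such that $a_{i,j}\in\mathbf{Q}$ for every $j\in\{1,\dots,n\}$. *)

theory Defs
  imports "HOL-Analysis.Analysis"
begin

definition Zn :: "(real^'n) set" where
  "Zn = {x. \<forall>i. x $ i \<in> \<int>}"

definition dinf :: "real^'n \<Rightarrow> real^'n \<Rightarrow> real" where
  "dinf x y = Max (range (\<lambda>i. \<bar>x $ i - y $ i\<bar>))"

definition supball :: "real^'n \<Rightarrow> real \<Rightarrow> (real^'n) set" where
  "supball x R = {y. dinf x y < R}"

definition dinf_set :: "real^'n \<Rightarrow> (real^'n) set \<Rightarrow> real" where
  "dinf_set x S = (INF y\<in>S. dinf x y)"

definition relatively_dense :: "(real^'n) set \<Rightarrow> bool" where
  "relatively_dense S \<longleftrightarrow> (\<exists>R0>0. \<forall>x R. R \<ge> R0 \<longrightarrow> supball x R \<inter> S \<noteq> {})"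

definition uniformly_discrete :: "(real^'n) set \<Rightarrow> bool" where
  "uniformly_discrete S \<longleftrightarrow> (\<exists>r>0. \<forall>x R. R \<le> r \<longrightarrow>
      (\<forall>y\<in>supball x R \<inter> S. \<forall>z\<in>supball x R \<inter> S. y = z))"

definition delone :: "(real^'n) set \<Rightarrow> bool" where
  "delone S \<longleftrightarrow> relatively_dense S \<and> uniformly_discrete S"

definition upper_density :: "real \<Rightarrow> (real^'n) set \<Rightarrow> real" where
  "upper_density R G = (SUP x\<in>UNIV.
      real (card (supball x R \<inter> G)) / real (card (supball x R \<inter> Zn)))"

definition translate :: "(real^'n) set \<Rightarrow> real^'n \<Rightarrow> (real^'n) set" where
  "translate G v = (\<lambda>y. y + v) ` G"

definition symdiff :: "'a set \<Rightarrow> 'a set \<Rightarrow> 'a set" where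
  "symdiff A B = (A - B) \<union> (B - A)"

definition almost_periodic_pattern :: "(real^'n) set \<Rightarrow> bool" where
  "almost_periodic_pattern G \<longleftrightarrow> G \<subseteq> Zn \<and> delone G \<and>
     (\<forall>\<epsilon>>0. \<exists>R\<epsilon>>0. \<exists>N. N \<subseteq> Zn \<and> relatively_dense N \<and>
        (\<forall>R\<ge>R\<epsilon>. \<forall>v\<in>N. upper_density R (symdiff (translate G v) G) < \<epsilon>))"

definition rational_rows :: "real^'n^'n \<Rightarrow> 'n set" where
  "rational_rows A = {i. \<forall>j. A $ i $ j \<in> \<rat>}"

end

theory Submission imports Defs begin

text \<open>Take the \<open>\<epsilon>/2\<close>-almost periods \<open>N\<close> of \<open>\<Gamma>\<close> and sort them into finitely many classes
  according to the fractional parts of \<open>Av\<close> (to precision \<open>\<delta>\<close>) and the residues of \<open>v\<close>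
  modulo a common denominator \<open>q\<close> of the rational entries of \<open>A\<close>. Fixing one representative
  \<open>w\<close> per class, the differences \<open>v - w\<close> form a relatively dense set, since they are
  perturbations of \<open>N\<close> by finitely many vectors. Each difference is an \<open>\<epsilon>\<close>-almost period,
  because the density of \<open>(\<Gamma> + v - w) \<Delta> \<Gamma>\<close> is at most that of
  \<open>(\<Gamma> + v) \<Delta> \<Gamma>\<close> plus that of \<open>(\<Gamma> + w) \<Delta> \<Gamma>\<close>; \<open>A(v - w)\<close> is \<open>\<delta>\<close>-close to \<open>\<int>\<^sup>n\<close>,
  and its rational rows are integers since \<open>v - w \<in> q\<int>\<^sup>n\<close>.\<close>

lemma dinf_less_iff: "dinf x y < R \<longleftrightarrow> (\<forall>i. \<bar>x$i - y$i\<bar> < R)"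
  unfolding dinf_def by (subst Max_less_iff) auto

lemma component_le_dinf: "\<bar>x$i - y$i\<bar> \<le> dinf x y"
  unfolding dinf_def by (rule Max_ge) auto

lemma dinf_nonneg: "0 \<le> dinf x y"
  using component_le_dinf[of x _ y] abs_ge_zero order_trans by blast

lemma dinf_diff_right: "dinf x (y - u) = dinf (x + u) y"
  unfolding dinf_def by (simp add: algebra_simps)

lemma dinf_set_le_dinf: "z \<in> S \<Longrightarrow> dinf_set x S \<le> dinf x z"
  unfolding dinf_set_def by (rule cINF_lower) (auto intro: bdd_belowI[of _ 0] dinf_nonneg)

lemma Zn_add: "a \<in> Zn \<Longrightarrow> b \<in> Zn \<Longrightarrow> a + b \<in> Zn"
  and Zn_minus: "a \<in> Zn \<Longrightarrow> - a \<in> Zn"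
  and Zn_diff: "a \<in> Zn \<Longrightarrow> b \<in> Zn \<Longrightarrow> a - b \<in> Zn"
  unfolding Zn_def by auto

lemma finite_supball_Int_Zn: "finite (supball x R \<inter> Zn)"
proof -
  define I where "I i = {\<lfloor>x$i\<rfloor> - \<lceil>\<bar>R\<bar>\<rceil> - 1 .. \<lceil>x$i\<rceil> + \<lceil>\<bar>R\<bar>\<rceil> + 1}" for i
  have "supball x R \<inter> Zn \<subseteq> (\<lambda>f. \<chi> i. real_of_int (f i)) ` PiE UNIV I"
  proof
    fix y assume "y \<in> supball x R \<inter> Zn"
    hence close: "\<And>i. \<bar>x$i - y$i\<bar> < R" and int: "\<And>i. y$i \<in> \<int>"
      by (auto simp: supball_def dinf_less_iff Zn_def)
    have floor_y: "real_of_int \<lfloor>y$i\<rfloor> = y$i" for i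
      using int by (metis Ints_cases floor_of_int)
    have "\<lfloor>y$i\<rfloor> \<in> I i" for i
    proof -
      have "\<bar>x$i - \<lfloor>y$i\<rfloor>\<bar> < R" unfolding floor_y by (rule close)
      then show ?thesis unfolding I_def by simp linarith
    qed
    hence "(\<lambda>i. \<lfloor>y$i\<rfloor>) \<in> PiE UNIV I" by (simp add: PiE_UNIV_domain)
    moreover have "y = (\<chi> i. real_of_int \<lfloor>y$i\<rfloor>)"
      unfolding vec_eq_iff vec_lambda_beta floor_y by simp
    ultimately show "y \<in> (\<lambda>f. \<chi> i. real_of_int (f i)) ` PiE UNIV I"
      by (intro image_eqI[where x = "\<lambda>i. \<lfloor>y$i\<rfloor>"]) simp_all
  qed
  moreover have "finite (PiE UNIV I)" unfolding I_def by (rule finite_PiE) auto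
  ultimately show ?thesis by (meson finite_imageI finite_subset)
qed

lemma mem_translate_iff: "a \<in> translate S u \<longleftrightarrow> a - u \<in> S"
  unfolding translate_def by (auto simp: image_iff) (metis diff_add_cancel)

lemma translate_Int: "translate (S \<inter> T) u = translate S u \<inter> translate T u"
  by (auto simp: mem_translate_iff)

lemma translate_supball: "translate (supball x R) u = supball (x + u) R"
  by (auto simp: mem_translate_iff supball_def dinf_diff_right)

lemma translate_Zn: "z \<in> Zn \<Longrightarrow> translate Zn z = Zn"
  by (auto simp: mem_translate_iff intro: Zn_diff) (metis Zn_add diff_add_cancel)

lemma translate_subset_Zn: "S \<subseteq> Zn \<Longrightarrow> z \<in> Zn \<Longrightarrow> translate S z \<subseteq> Zn"
  unfolding translate_def using Zn_add by auto

lemma card_translate: "card (translate S u) = card S"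
  unfolding translate_def by (rule card_image) (simp add: inj_on_def)

definition density_ratio :: "real \<Rightarrow> (real^'n) set \<Rightarrow> real^'n \<Rightarrow> real" where
  "density_ratio R S x = real (card (supball x R \<inter> S)) / real (card (supball x R \<inter> Zn))"

lemma upper_density_eq_SUP: "upper_density R S = (SUP x. density_ratio R S x)"
  unfolding upper_density_def density_ratio_def by simp

lemma density_ratio_mono:
  assumes "S \<subseteq> T" "T \<subseteq> Zn" shows "density_ratio R S x \<le> density_ratio R T x"
proof -
  have "card (supball x R \<inter> S) \<le> card (supball x R \<inter> T)"
    by (rule card_mono[OF finite_subset[OF _ finite_supball_Int_Zn]]) (use assms in auto)
  thus ?thesis unfolding density_ratio_def by (simp add: divide_right_mono)
qed

lemma bdd_above_density_ratio: "S \<subseteq> Zn \<Longrightarrow> bdd_above (range (density_ratio R S))"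
proof (rule bdd_aboveI[of _ 1], clarify)
  fix x assume "S \<subseteq> Zn"
  hence "density_ratio R S x \<le> density_ratio R Zn x" by (rule density_ratio_mono) simp
  also have "\<dots> \<le> 1" unfolding density_ratio_def by (simp add: divide_le_eq_1)
  finally show "density_ratio R S x \<le> 1" .
qed

lemma upper_density_mono:
  assumes "S \<subseteq> T" "T \<subseteq> Zn" shows "upper_density R S \<le> upper_density R T"
  unfolding upper_density_eq_SUP
  by (rule cSUP_mono) (use density_ratio_mono[OF assms] bdd_above_density_ratio[OF assms(2)] in auto)

lemma upper_density_Un_le:
  assumes "S \<subseteq> Zn" "T \<subseteq> Zn"
  shows "upper_density R (S \<union> T) \<le> upper_density R S + upper_density R T"
  unfolding upper_density_eq_SUP
proof (rule cSUP_least)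
  fix x
  have "card (supball x R \<inter> (S \<union> T)) \<le> card (supball x R \<inter> S) + card (supball x R \<inter> T)"
    by (metis Int_Un_distrib card_Un_le)
  hence "density_ratio R (S \<union> T) x \<le> density_ratio R S x + density_ratio R T x"
    unfolding density_ratio_def by (simp add: add_divide_distrib[symmetric] divide_right_mono)
  also have "\<dots> \<le> (SUP x. density_ratio R S x) + (SUP x. density_ratio R T x)"
    by (intro add_mono cSUP_upper bdd_above_density_ratio assms) auto
  finally show "density_ratio R (S \<union> T) x \<le> \<dots>" .
qed simp

lemma upper_density_translate:
  assumes "z \<in> Zn" shows "upper_density R (translate S z) = upper_density R S"
proof -
  have "density_ratio R (translate S z) x = density_ratio R S (x - z)" for x
  proof -
    have "supball x R = translate (supball (x - z) R) z"
      by (simp add: translate_supball)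
    thus ?thesis
      unfolding density_ratio_def
      by (metis card_translate translate_Int translate_Zn[OF assms])
  qed
  moreover have "range (\<lambda>x. density_ratio R S (x - z)) = range (density_ratio R S)"
    by (auto simp: image_iff) (metis add_diff_cancel)
  ultimately show ?thesis unfolding upper_density_eq_SUP by simp
qed

lemma symdiff_translate_diff_subset:
  "symdiff (translate G (v - w)) G \<subseteq>
     translate (symdiff (translate G v) G) (- w) \<union> translate (symdiff (translate G w) G) (- w)"
  by (auto simp: symdiff_def mem_translate_iff algebra_simps)

lemma upper_density_symdiff_translate_diff_le:
  assumes "G \<subseteq> Zn" "v \<in> Zn" "w \<in> Zn"
  shows "upper_density R (symdiff (translate G (v - w)) G)
    \<le> upper_density R (symdiff (translate G v) G) + upper_density R (symdiff (translate G w) G)"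
proof -
  let ?D = "\<lambda>u. symdiff (translate G u) G"
  have D_Zn: "translate (?D u) (- w) \<subseteq> Zn" if "u \<in> Zn" for u
    using assms that unfolding symdiff_def
    by (intro translate_subset_Zn Zn_minus) (auto dest: translate_subset_Zn)
  have "upper_density R (?D (v - w))
      \<le> upper_density R (translate (?D v) (- w) \<union> translate (?D w) (- w))"
    by (rule upper_density_mono[OF symdiff_translate_diff_subset]) (use D_Zn assms in auto)
  also have "\<dots> \<le> upper_density R (translate (?D v) (- w)) + upper_density R (translate (?D w) (- w))"
    by (rule upper_density_Un_le) (use D_Zn assms in auto)
  also have "\<dots> = upper_density R (?D v) + upper_density R (?D w)"
    using upper_density_translate[OF Zn_minus[OF assms(3)]] by simp
  finally show ?thesis .
qed

lemma relatively_dense_diff_class_representative: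
  fixes N :: "(real^'n) set" and \<kappa> :: "real^'n \<Rightarrow> 'c"
  assumes "relatively_dense N" "finite (\<kappa> ` N)"
  obtains r where "\<And>v. v \<in> N \<Longrightarrow> r v \<in> N" "\<And>v. v \<in> N \<Longrightarrow> \<kappa> (r v) = \<kappa> v"
    "relatively_dense ((\<lambda>v. v - r v) ` N)"
proof -
  define rep where "rep c = (SOME w. w \<in> N \<and> \<kappa> w = c)" for c
  have rep: "rep (\<kappa> v) \<in> N \<and> \<kappa> (rep (\<kappa> v)) = \<kappa> v" if "v \<in> N" for v
    unfolding rep_def by (rule someI[of _ v]) (use that in auto)
  define W where "W = Max (insert 0 ((\<lambda>c. dinf 0 (rep c)) ` \<kappa> ` N))"
  have W_nonneg: "0 \<le> W"
    unfolding W_def by (rule Max_ge) (use assms(2) in auto)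
  have rep_bound: "\<bar>rep (\<kappa> v) $ i\<bar> \<le> W" if "v \<in> N" for v i
  proof -
    have "\<bar>rep (\<kappa> v) $ i\<bar> \<le> dinf 0 (rep (\<kappa> v))"
      using component_le_dinf[of 0 i] by simp
    also have "\<dots> \<le> W"
      unfolding W_def by (rule Max_ge) (use assms(2) that in auto)
    finally show ?thesis .
  qed
  obtain Rd where "Rd > 0" and Rd: "\<And>x R. R \<ge> Rd \<Longrightarrow> supball x R \<inter> N \<noteq> {}"
    using assms(1) unfolding relatively_dense_def by blast
  have "relatively_dense ((\<lambda>v. v - rep (\<kappa> v)) ` N)"
    unfolding relatively_dense_def
  proof (intro exI[of _ "Rd + W"] conjI allI impI)
    show "Rd + W > 0" using \<open>Rd > 0\<close> W_nonneg by simp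
    fix x R assume "Rd + W \<le> R"
    obtain v where v: "v \<in> supball x Rd" "v \<in> N" using Rd[of Rd x] by auto
    have "\<bar>x$i - (v - rep (\<kappa> v))$i\<bar> < R" for i
    proof -
      have "\<bar>x$i - v$i\<bar> < Rd" using v(1) unfolding supball_def dinf_less_iff by blast
      thus ?thesis using rep_bound[OF v(2), of i] \<open>Rd + W \<le> R\<close> by simp
    qed
    thus "supball x R \<inter> (\<lambda>v. v - rep (\<kappa> v)) ` N \<noteq> {}"
      unfolding supball_def dinf_less_iff using v(2) by blast
  qed
  with rep show ?thesis using that[of "\<lambda>v. rep (\<kappa> v)"] by blast
qed

lemma abs_diff_floor_diff_less:
  fixes x y M :: real
  assumes "\<lfloor>frac x * M\<rfloor> = \<lfloor>frac y * M\<rfloor>" "M > 0"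
  shows "\<bar>(x - y) - of_int (\<lfloor>x\<rfloor> - \<lfloor>y\<rfloor>)\<bar> < 1 / M"
proof -
  have "\<bar>frac x * M - frac y * M\<bar> < 1"
    using assms(1) by linarith
  hence "\<bar>frac x - frac y\<bar> * M < 1"
    using assms(2) by (simp add: abs_mult left_diff_distrib[symmetric])
  thus ?thesis
    using assms(2) by (simp add: frac_def field_simps)
qed

lemma dinf_set_diff_Zn_less:
  fixes a b :: "real^'n"
  assumes "\<And>i. \<lfloor>frac (a$i) * M\<rfloor> = \<lfloor>frac (b$i) * M\<rfloor>" "M > 0"
  shows "dinf_set (a - b) Zn < 1 / M"
proof -
  define z :: "real^'n" where "z = (\<chi> i. of_int (\<lfloor>a$i\<rfloor> - \<lfloor>b$i\<rfloor>))"
  have "z \<in> Zn" unfolding z_def Zn_def by simp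
  hence "dinf_set (a - b) Zn \<le> dinf (a - b) z" by (rule dinf_set_le_dinf)
  also have "dinf (a - b) z < 1 / M"
    unfolding dinf_less_iff z_def using abs_diff_floor_diff_less[OF assms(1) assms(2)] by simp
  finally show ?thesis .
qed

lemma finite_range_floor_frac_mult: "finite (range (\<lambda>x. \<lfloor>frac x * M\<rfloor>))"
proof (rule finite_subset)
  show "range (\<lambda>x. \<lfloor>frac x * M\<rfloor>) \<subseteq> {-\<lceil>\<bar>M\<bar>\<rceil> .. \<lceil>\<bar>M\<bar>\<rceil>}"
  proof clarify
    fix x
    have "\<bar>frac x * M\<bar> \<le> \<bar>M\<bar>"
      using frac_ge_0[of x] frac_lt_1[of x] by (simp add: abs_mult mult_left_le_one_le)
    thus "\<lfloor>frac x * M\<rfloor> \<in> {-\<lceil>\<bar>M\<bar>\<rceil> .. \<lceil>\<bar>M\<bar>\<rceil>}"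
      unfolding atLeastAtMost_iff le_floor_iff floor_le_iff abs_le_iff
      using le_of_int_ceiling[of "\<bar>M\<bar>"] by (intro conjI; simp; linarith)
  qed
qed simp

lemma finite_range_mod: "(q :: int) > 0 \<Longrightarrow> finite (range (\<lambda>k. k mod q))"
  by (rule finite_subset[of _ "{0..q - 1}"]) auto

lemma finite_range_componentwise:
  fixes h :: "'a \<Rightarrow> 'b" and f :: "'c \<Rightarrow> 'i::finite \<Rightarrow> 'a"
  assumes "finite (range h)"
  shows "finite (range (\<lambda>v i. h (f v i)))"
proof (rule finite_subset)
  show "range (\<lambda>v i. h (f v i)) \<subseteq> PiE UNIV (\<lambda>_. range h)"
    by (auto simp: PiE_UNIV_domain)
  show "finite (PiE (UNIV :: 'i set) (\<lambda>_. range h))" by (rule finite_PiE) (auto simp: assms)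
qed

lemma Rats_common_denominator:
  fixes S :: "'a::field_char_0 set"
  assumes "finite S" "S \<subseteq> \<rat>"
  obtains q :: int where "q > 0" "\<And>r. r \<in> S \<Longrightarrow> of_int q * r \<in> \<int>"
  using assms
proof (induction S arbitrary: thesis rule: finite_induct)
  case empty
  show ?case by (rule empty.prems(1)[of 1]) auto
next
  case (insert r S)
  obtain q where "q > 0" and q: "\<And>s. s \<in> S \<Longrightarrow> of_int q * s \<in> \<int>"
    using insert.IH insert.prems(2) by blast
  obtain a b where "b > 0" and r: "r = of_int a / of_int b"
    using insert.prems(2) by (auto elim: Rats_cases')
  show ?case
  proof (rule insert.prems(1)[of "q * b"])
    show "q * b > 0" using \<open>q > 0\<close> \<open>b > 0\<close> by simp
    fix s assume "s \<in> insert r S"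
    then consider "s = r" | "s \<in> S" by blast
    thus "of_int (q * b) * s \<in> \<int>"
    proof cases
      case 1 thus ?thesis using \<open>b > 0\<close> r by simp
    next
      case 2
      have "of_int (q * b) * s = (of_int q * s) * of_int b" by simp
      thus ?thesis using q[OF 2] by (simp only: Ints_mult Ints_of_int)
    qed
  qed
qed

lemma rational_rows_common_denominator:
  fixes A :: "real^'n^'n"
  obtains q :: int where "q > 0" "\<And>i j. i \<in> rational_rows A \<Longrightarrow> of_int q * A$i$j \<in> \<int>"
proof -
  have "finite {A$i$j | i j. A$i$j \<in> \<rat>}"
    by (rule finite_subset[of _ "range (\<lambda>(i, j). A$i$j)"]) auto
  then obtain q :: int where "q > 0" and "\<And>r. r \<in> {A$i$j | i j. A$i$j \<in> \<rat>} \<Longrightarrow> of_int q * r \<in> \<int>"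
    by (rule Rats_common_denominator) auto
  thus ?thesis using that unfolding rational_rows_def by blast
qed

lemma Ints_diff_eq_mult_if_floor_mod_eq:
  fixes x y :: real
  assumes "x \<in> \<int>" "y \<in> \<int>" "\<lfloor>x\<rfloor> mod q = \<lfloor>y\<rfloor> mod q"
  obtains k where "x - y = of_int (q * k)"
proof -
  obtain k where "\<lfloor>x\<rfloor> - \<lfloor>y\<rfloor> = q * k"
    using assms(3) by (metis mod_eq_dvd_iff dvdE)
  moreover have "x - y = of_int (\<lfloor>x\<rfloor> - \<lfloor>y\<rfloor>)"
    using assms(1,2) by (metis Ints_cases floor_of_int of_int_diff)
  ultimately have "x - y = of_int (q * k)" by metis
  thus ?thesis by (rule that)
qed

lemma matrix_vector_mult_component_Ints:
  fixes A :: "'a::comm_ring_1^'n^'m"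
  assumes "\<And>j. of_int q * A$i$j \<in> \<int>" and "\<And>j. \<exists>k. u$j = of_int (q * k)"
  shows "(A *v u)$i \<in> \<int>"
  unfolding matrix_vector_mult_def vec_lambda_beta
proof (rule Ints_sum)
  fix j
  obtain k where "u$j = of_int (q * k)" using assms(2) by blast
  hence "A$i$j * u$j = (of_int q * A$i$j) * of_int k" by (simp add: algebra_simps)
  thus "A$i$j * u$j \<in> \<int>" by (metis Ints_mult Ints_of_int assms(1))
qed

definition frac_mod_class :: "real \<Rightarrow> int \<Rightarrow> real^'n^'m \<Rightarrow> real^'n \<Rightarrow> ('m \<Rightarrow> int) \<times> ('n \<Rightarrow> int)"
  where "frac_mod_class M q A v = ((\<lambda>i. \<lfloor>frac ((A *v v)$i) * M\<rfloor>), (\<lambda>j. \<lfloor>v$j\<rfloor> mod q))"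

lemma finite_range_frac_mod_class:
  fixes A :: "real^'n^'m"
  shows "q > 0 \<Longrightarrow> finite (range (frac_mod_class M q A))"
proof (rule finite_subset)
  show "range (frac_mod_class M q A) \<subseteq>
      range (\<lambda>v i. \<lfloor>frac ((A *v v)$i) * M\<rfloor>) \<times> range (\<lambda>(v :: real^'n) j. \<lfloor>v$j\<rfloor> mod q)"
    unfolding frac_mod_class_def by auto
qed (intro finite_cartesian_product finite_range_componentwise finite_range_floor_frac_mult
    finite_range_mod)

lemma dinf_set_mult_diff_Zn_less:
  assumes "frac_mod_class M q A v = frac_mod_class M q A w" "M > 0"
  shows "dinf_set (A *v (v - w)) Zn < 1 / M"
proof -
  have "\<lfloor>frac ((A *v v)$i) * M\<rfloor> = \<lfloor>frac ((A *v w)$i) * M\<rfloor>" for i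
    using arg_cong[OF assms(1), of "\<lambda>c. fst c i"] unfolding frac_mod_class_def by simp
  thus ?thesis
    unfolding matrix_vector_mult_diff_distrib using assms(2) by (rule dinf_set_diff_Zn_less)
qed

lemma mult_diff_component_Ints:
  assumes "frac_mod_class M q A v = frac_mod_class M q A w" "v \<in> Zn" "w \<in> Zn"
    and "\<And>j. of_int q * A$i$j \<in> \<int>"
  shows "(A *v (v - w))$i \<in> \<int>"
proof (rule matrix_vector_mult_component_Ints[OF assms(4)])
  fix j
  have "\<lfloor>v$j\<rfloor> mod q = \<lfloor>w$j\<rfloor> mod q"
    using arg_cong[OF assms(1), of "\<lambda>c. snd c j"] unfolding frac_mod_class_def by simp
  moreover have "v$j \<in> \<int>" "w$j \<in> \<int>" using assms(2,3) unfolding Zn_def by auto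
  ultimately show "\<exists>k. (v - w)$j = of_int (q * k)"
    unfolding vector_minus_component by (metis Ints_diff_eq_mult_if_floor_mod_eq)
qed

theorem lemmaB3:
  fixes G :: "(real^'n) set" and A :: "real^'n^'n" and \<epsilon> \<delta> :: real
  assumes "almost_periodic_pattern G" and "\<epsilon> > 0" and "\<delta> > 0" and "invertible A"
  shows "\<exists>R>0. \<exists>N. N \<subseteq> Zn \<and> relatively_dense N \<and>
           (\<forall>R'\<ge>R. \<forall>v\<in>N. upper_density R' (symdiff (translate G v) G) < \<epsilon>) \<and>
           (\<forall>v\<in>N. dinf_set (A *v v) Zn < \<delta>) \<and>
           (\<forall>i\<in>rational_rows A. \<forall>v\<in>N. (A *v v) $ i \<in> \<int>)"
proof -
  have "G \<subseteq> Zn" using assms(1) unfolding almost_periodic_pattern_def by blast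
  obtain R N where "R > 0" "N \<subseteq> Zn" "relatively_dense N" and almost_period:
      "\<And>R' v. R' \<ge> R \<Longrightarrow> v \<in> N \<Longrightarrow> upper_density R' (symdiff (translate G v) G) < \<epsilon>/2"
    using assms(1,2) unfolding almost_periodic_pattern_def by (metis half_gt_zero)
  obtain q where "q > 0" and q: "\<And>i j. i \<in> rational_rows A \<Longrightarrow> of_int q * A$i$j \<in> \<int>"
    using rational_rows_common_denominator[of A] by blast
  let ?\<kappa> = "frac_mod_class (1 / \<delta>) q A"
  obtain r where r: "\<And>v. v \<in> N \<Longrightarrow> r v \<in> N" "\<And>v. v \<in> N \<Longrightarrow> ?\<kappa> (r v) = ?\<kappa> v"
    and "relatively_dense ((\<lambda>v. v - r v) ` N)"
    using relatively_dense_diff_class_representative[OF \<open>relatively_dense N\<close>]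
      finite_subset[OF _ finite_range_frac_mod_class[OF \<open>q > 0\<close>]] by blast
  show ?thesis
  proof (intro exI[of _ R] exI[of _ "(\<lambda>v. v - r v) ` N"] conjI ballI allI impI)
    show "(\<lambda>v. v - r v) ` N \<subseteq> Zn" using \<open>N \<subseteq> Zn\<close> r(1) Zn_diff by blast
  next
    fix R' u assume "R \<le> R'" "u \<in> (\<lambda>v. v - r v) ` N"
    then obtain v where "v \<in> N" "u = v - r v" by blast
    have vw: "v \<in> Zn" "r v \<in> Zn" using \<open>v \<in> N\<close> r(1) \<open>N \<subseteq> Zn\<close> by auto
    show "upper_density R' (symdiff (translate G u) G) < \<epsilon>"
      unfolding \<open>u = v - r v\<close>
      using upper_density_symdiff_translate_diff_le[OF \<open>G \<subseteq> Zn\<close> vw, of R']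
        almost_period[OF \<open>R \<le> R'\<close> \<open>v \<in> N\<close>] almost_period[OF \<open>R \<le> R'\<close> r(1)[OF \<open>v \<in> N\<close>]]
      by linarith
  next
    fix u assume "u \<in> (\<lambda>v. v - r v) ` N"
    then obtain v where "v \<in> N" "u = v - r v" by blast
    thus "dinf_set (A *v u) Zn < \<delta>"
      using dinf_set_mult_diff_Zn_less[OF r(2)[symmetric], of v] assms(3) by simp
  next
    fix i u assume "i \<in> rational_rows A" "u \<in> (\<lambda>v. v - r v) ` N"
    then obtain v where "v \<in> N" "u = v - r v" by blast
    thus "(A *v u)$i \<in> \<int>"
      using mult_diff_component_Ints[OF r(2)[symmetric] _ _ q[OF \<open>i \<in> rational_rows A\<close>]]
        r(1) \<open>N \<subseteq> Zn\<close> by blast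
  qed (use \<open>R > 0\<close> \<open>relatively_dense ((\<lambda>v. v - r v) ` N)\<close> in auto)
qed

end
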